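(* There is a universal constant $C>0$ such that the following holds. Let $U=(u^1,\dots,u^m)$ be a viscosity solution of the vectorial one-phase problem in $B_1\subset\mathbb R^n$ and let $\varepsilon>0$ be such that $$|U-f^1x_n^+|\le\varepsilon\quad\text{in } B_1,\qquad |U|\equiv0\quad\text{in } B_1\cap\{x_n<-\varepsilon\},$$ where $f^1=(1,0,\dots,0)\in\mathbb R^m$. Then (i) for $i=2,\dots,m$, $|u^i|\le C\varepsilon(x_n+\varepsilon)^+$ in $B_{3/4}$; (ii) $x_n-\varepsilon\le u^1\le|U|\le(x_n+2\varepsilon)^+$ in $B_1$.
   Context: $t^+=\max\{t,0\}$; $x_n$ is the last coordinate of $x\in\mathbb R^n$. Definition (viscosity solution): $U\in C(\Omega,\mathbb R^m)$ is a viscosity solution of $\Delta U=0$ in $\Omega(U):=\Omega\cap\{|U|>0\}$, $|\nabla|U||=1$ on $F(U):=\Omega\cap\partial\Omega(U)$, if each component $u^i$ is harmonic in $\Omega(U)$ and, for every $x_0\in F(U)$ and every $\varphi\in C^2$ near $x_0$ with $|\nabla\varphi(x_0)|\ne0$: (i) if $|\nabla\varphi(x_0)|>1$, then for every unit vector $f\in\mathbb R^m$, $\langle U,f\rangle$ cannot be touched by below by $\varphi$ at $x_0$ (i.e. there is no such $\varphi$ with $\varphi(x_0)=\langle U,f\rangle(x_0)$ and $\varphi\le\langle U,f\rangle$ near $x_0$); (ii) if $|\nabla\varphi(x_0)|<1$, then $|U|$ cannot be touched by above by $\varphi$ at $x_0$. Universal constants depend only on $n$ and $m$. *)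

theory Defs
  imports "HOL-Analysis.Analysis"
begin

text \<open>Coordinates: the index type is finite and linearly ordered; the last
coordinate x_n is the one at the largest index, and f^1 is the first basis vector.\<close>

definition last_idx :: "'n::{finite,linorder}" where
  "last_idx = Max UNIV"

definition first_idx :: "'m::{finite,linorder}" where
  "first_idx = Min UNIV"

definition xn :: "real ^ 'n::{finite,linorder} \<Rightarrow> real" where
  "xn x = x $ last_idx"

definition e1 :: "real ^ 'm::{finite,linorder}" where
  "e1 = axis first_idx 1"

definition partial :: "'n::finite \<Rightarrow> (real ^ 'n \<Rightarrow> real) \<Rightarrow> real ^ 'n \<Rightarrow> real" where
  "partial i \<phi> y = frechet_derivative \<phi> (at y) (axis i 1)"

definition grad :: "(real ^ 'n::finite \<Rightarrow> real) \<Rightarrow> real ^ 'n \<Rightarrow> real ^ 'n" where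
  "grad \<phi> x = (\<chi> i. partial i \<phi> x)"

definition laplacian :: "(real ^ 'n::finite \<Rightarrow> real) \<Rightarrow> real ^ 'n \<Rightarrow> real" where
  "laplacian \<phi> x = (\<Sum>i\<in>UNIV. partial i (partial i \<phi>) x)"

definition C2_on :: "(real ^ 'n::finite) set \<Rightarrow> (real ^ 'n \<Rightarrow> real) \<Rightarrow> bool" where
  "C2_on S \<phi> \<longleftrightarrow>
     (\<forall>x\<in>S. \<phi> differentiable (at x)) \<and>
     (\<forall>i. \<forall>x\<in>S. partial i \<phi> differentiable (at x)) \<and>
     (\<forall>i j. continuous_on S (partial j (partial i \<phi>)))"

definition harmonic_on :: "(real ^ 'n::finite) set \<Rightarrow> (real ^ 'n \<Rightarrow> real) \<Rightarrow> bool" where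
  "harmonic_on S u \<longleftrightarrow> C2_on S u \<and> (\<forall>x\<in>S. laplacian u x = 0)"

definition viscosity_solution ::
    "(real ^ 'n::finite) set \<Rightarrow> (real ^ 'n \<Rightarrow> real ^ 'm::finite) \<Rightarrow> bool" where
  "viscosity_solution \<Omega> U \<longleftrightarrow>
     continuous_on \<Omega> U \<and>
     (\<forall>i. harmonic_on (\<Omega> \<inter> {x. norm (U x) > 0}) (\<lambda>x. U x $ i)) \<and>
     (\<forall>x0 \<in> \<Omega> \<inter> frontier (\<Omega> \<inter> {x. norm (U x) > 0}).
        \<forall>\<phi> r. r > 0 \<longrightarrow> C2_on (ball x0 r) \<phi> \<longrightarrow> grad \<phi> x0 \<noteq> 0 \<longrightarrow>
          (norm (grad \<phi> x0) > 1 \<longrightarrow>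
             (\<forall>f::real ^ 'm. norm f = 1 \<longrightarrow>
                \<not> (\<phi> x0 = U x0 \<bullet> f \<and> (\<forall>x \<in> ball x0 r \<inter> \<Omega>. \<phi> x \<le> U x \<bullet> f)))) \<and>
          (norm (grad \<phi> x0) < 1 \<longrightarrow>
             \<not> (\<phi> x0 = norm (U x0) \<and> (\<forall>x \<in> ball x0 r \<inter> \<Omega>. norm (U x) \<le> \<phi> x))))"

end

theory Submission
  imports Defs
begin

text \<open>
  Part (ii) is pointwise: U lies within epsilon of the ramp x_n^+ f^1 and vanishes below
  x_n = -epsilon. For part (i) fix a component u = u^i with i > 1, so that |u| <= epsilon.
  Near a point z with 0 < z_n + epsilon < 1/(8n), compare +-u with the quadratic barrier
    v(x) = epsilon (16n^2 (x_n + epsilon) - 128n^2 (n-1) (x_n + epsilon)^2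
                    + 128n^2 sum_{j<n} (x_j - z_j)^2)
  on the box {-epsilon <= x_n <= 1/(8n) - epsilon, |x_j - z_j| <= 1/(8n)}. The barrier is
  harmonic, nonnegative on the box, and at least 2 epsilon on its lateral and top faces, while
  u vanishes on the bottom face and wherever U = 0 and is harmonic elsewhere; the weak maximum
  principle gives |u(z)| <= v(z) <= 16n^2 epsilon (z_n + epsilon). When z_n + epsilon >= 1/(8n)
  the bound |u| <= epsilon already suffices.
\<close>

lemma not_local_max_if_second_deriv_pos:
  fixes f f' :: "real \<Rightarrow> real"
  assumes r: "r > 0" and der: "\<And>s. \<bar>s\<bar> < r \<Longrightarrow> (f has_real_derivative f' s) (at s)"
    and der2: "(f' has_real_derivative d) (at 0)" and d: "d > 0"
  shows "\<exists>s. \<bar>s\<bar> < r \<and> f s > f 0"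
proof (rule ccontr)
  assume "\<not> ?thesis"
  hence le: "\<And>s. \<bar>s\<bar> < r \<Longrightarrow> f s \<le> f 0" by auto
  have f'0: "f' 0 = 0"
    by (rule DERIV_local_max[OF der[of 0] r]) (use le r in auto)
  obtain e where e: "e > 0" "\<And>h. 0 < h \<Longrightarrow> h < e \<Longrightarrow> f' 0 < f' h"
    using DERIV_pos_inc_right[OF der2 d] by auto
  define h where "h = min e r / 2"
  have h: "0 < h" "h < e" "h < r" using e r by (auto simp: h_def)
  obtain z where z: "0 < z" "z < h" "f h - f 0 = h * f' z"
    using MVT2[of 0 h f f'] h der by force
  have "f' z > 0" using e z h f'0 by auto
  hence "f h > f 0" using z h by (simp add: algebra_simps)
  with le[of h] h show False by linarith
qed

lemma has_real_derivative_along_line: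
  fixes w :: "'a::real_normed_vector \<Rightarrow> real"
  assumes "w differentiable (at (y + s *\<^sub>R e))"
  shows "((\<lambda>t. w (y + t *\<^sub>R e)) has_real_derivative frechet_derivative w (at (y + s *\<^sub>R e)) e) (at s)"
proof -
  let ?D = "frechet_derivative w (at (y + s *\<^sub>R e))"
  have dw: "(w has_derivative ?D) (at (y + s *\<^sub>R e))"
    using assms frechet_derivative_works by blast
  have "((\<lambda>t. y + t *\<^sub>R e) has_derivative (\<lambda>h. h *\<^sub>R e)) (at s)"
    by (auto intro!: derivative_eq_intros)
  from has_derivative_compose[OF this dw]
  have "((\<lambda>t. w (y + t *\<^sub>R e)) has_derivative (\<lambda>h. ?D (h *\<^sub>R e))) (at s)"
    by (simp add: o_def)
  moreover have "(\<lambda>h. ?D (h *\<^sub>R e)) = (\<lambda>h. ?D e * h)"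
    using has_derivative_linear[OF dw] by (auto simp: linear_scale)
  ultimately show ?thesis
    by (simp add: has_field_derivative_def)
qed

lemma sum_components_add_axis:
  fixes F :: "'n::finite \<Rightarrow> real \<Rightarrow> 'a::ab_group_add"
  shows "(\<Sum>k\<in>UNIV. F k ((y + s *\<^sub>R axis j 1) $ k))
           = (\<Sum>k\<in>UNIV. F k (y $ k)) + (F j (y $ j + s) - F j (y $ j))"
proof -
  have "(\<Sum>k\<in>UNIV. F k ((y + s *\<^sub>R axis j 1) $ k))
          = (\<Sum>k\<in>UNIV. F k (y $ k) + (if k = j then F j (y $ j + s) - F j (y $ j) else 0))"
    by (rule sum.cong) (auto simp: axis_def)
  then show ?thesis by (simp add: sum.distrib)
qed

text \<open>The Laplacian of sigma w + p at y is positive, so along some coordinate line through y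
  the second derivative is positive and y is not a maximum on that line.\<close>

lemma C2_plus_axis_quadratic_no_local_max:
  fixes w p :: "real ^ 'n::finite \<Rightarrow> real"
  assumes S: "open S" "y \<in> S" and w: "C2_on S w"
    and p: "\<And>j s. p (y + s *\<^sub>R axis j 1) = p y + B j * s + A j * s\<^sup>2"
    and lap: "\<sigma> * laplacian w y + 2 * sum A UNIV > 0" and r: "r > 0"
  shows "\<exists>x\<in>ball y r. \<sigma> * w x + p x > \<sigma> * w y + p y"
proof -
  have "(\<Sum>j\<in>UNIV. \<sigma> * partial j (partial j w) y + 2 * A j) = \<sigma> * laplacian w y + 2 * sum A UNIV"
    by (simp add: laplacian_def sum.distrib sum_distrib_left)
  with lap have "(\<Sum>j\<in>UNIV. \<sigma> * partial j (partial j w) y + 2 * A j) > 0" by simp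
  then obtain j where dj: "\<sigma> * partial j (partial j w) y + 2 * A j > 0"
    by (meson not_less sum_nonpos)
  obtain r0 where r0: "r0 > 0" "ball y r0 \<subseteq> S" using S open_contains_ball by blast
  define R where "R = min r r0"
  have R: "R > 0" "R \<le> r" "R \<le> r0" using r r0 by (auto simp: R_def)
  define e :: "real ^ 'n" where "e = axis j 1"
  have inb: "y + s *\<^sub>R e \<in> ball y R" if "\<bar>s\<bar> < R" for s
    using that by (simp add: e_def dist_norm)
  define f where "f s = \<sigma> * w (y + s *\<^sub>R e) + (p y + B j * s + A j * s\<^sup>2)" for s
  define f' where "f' s = \<sigma> * partial j w (y + s *\<^sub>R e) + (B j + 2 * A j * s)" for s
  have "(f has_real_derivative f' s) (at s)" if "\<bar>s\<bar> < R" for s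
  proof -
    have "y + s *\<^sub>R e \<in> S" using inb[OF that] R r0 by auto
    hence "w differentiable (at (y + s *\<^sub>R e))" using w by (auto simp: C2_on_def)
    from has_real_derivative_along_line[OF this]
    have "((\<lambda>t. w (y + t *\<^sub>R e)) has_real_derivative partial j w (y + s *\<^sub>R e)) (at s)"
      by (simp add: partial_def e_def)
    then show ?thesis unfolding f_def f'_def
      by (auto intro!: derivative_eq_intros)
  qed
  moreover have "(f' has_real_derivative \<sigma> * partial j (partial j w) y + 2 * A j) (at 0)"
  proof -
    have "partial j w differentiable (at (y + 0 *\<^sub>R e))" using w S by (simp add: C2_on_def)
    from has_real_derivative_along_line[OF this]
    have "((\<lambda>t. partial j w (y + t *\<^sub>R e)) has_real_derivative partial j (partial j w) y) (at 0)"
      by (simp add: partial_def e_def)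
    then show ?thesis unfolding f'_def
      by (auto intro!: derivative_eq_intros)
  qed
  ultimately obtain s where s: "\<bar>s\<bar> < R" "f s > f 0"
    using not_local_max_if_second_deriv_pos[OF R(1) _ _ dj] by blast
  moreover have "f s = \<sigma> * w (y + s *\<^sub>R e) + p (y + s *\<^sub>R e)" "f 0 = \<sigma> * w y + p y"
    using p by (auto simp: f_def e_def)
  moreover have "y + s *\<^sub>R e \<in> ball y r" using inb[OF s(1)] R by auto
  ultimately show ?thesis by auto
qed

lemma continuous_on_separable_sum:
  fixes Q :: "'n::finite \<Rightarrow> real \<Rightarrow> real"
  assumes "\<And>j s. Q j s = c j + b j * s + a j * s\<^sup>2"
  shows "continuous_on S (\<lambda>x::real ^ 'n. \<Sum>j\<in>UNIV. Q j (x $ j))"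
  unfolding assms by (intro continuous_intros continuous_on_component continuous_on_id)

text \<open>Weak maximum principle against a harmonic separable quadratic v: adding a small
  multiple of |x|^2 makes sigma w - v strictly subharmonic, so it cannot peak inside.\<close>

lemma harmonic_le_separable_quadratic:
  fixes w :: "real ^ 'n::finite \<Rightarrow> real" and Q :: "'n \<Rightarrow> real \<Rightarrow> real"
  assumes harm: "harmonic_on D w" and D: "open D"
    and cw: "continuous_on (cbox lo hi) w"
    and Q: "\<And>j s. Q j s = c j + b j * s + a j * s\<^sup>2" and a: "sum a UNIV = 0"
    and bdry: "\<And>x. x \<in> cbox lo hi \<Longrightarrow> x \<notin> box lo hi \<inter> D \<Longrightarrow> \<sigma> * w x \<le> (\<Sum>j\<in>UNIV. Q j (x $ j))"
    and x0: "x0 \<in> cbox lo hi"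
  shows "\<sigma> * w x0 \<le> (\<Sum>j\<in>UNIV. Q j (x0 $ j))"
proof (rule ccontr)
  define K where "K = cbox lo hi"
  define v where "v x = (\<Sum>j\<in>UNIV. Q j (x $ j))" for x :: "real ^ 'n"
  define M where "M = \<sigma> * w x0 - v x0"
  assume "\<not> ?thesis"
  hence M: "M > 0" by (simp add: M_def v_def)
  have K: "compact K" "K \<noteq> {}" using x0 by (auto simp: K_def)
  have csq: "continuous_on K (\<lambda>x. \<Sum>j\<in>UNIV. (x $ j)\<^sup>2)"
    by (intro continuous_intros continuous_on_component continuous_on_id)
  obtain z :: "real ^ 'n" where z: "\<And>x. x \<in> K \<Longrightarrow> (\<Sum>j\<in>UNIV. (x $ j)\<^sup>2) \<le> (\<Sum>j\<in>UNIV. (z $ j)\<^sup>2)"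
    using continuous_attains_sup[OF K csq] by auto
  define R where "R = (\<Sum>j\<in>UNIV. (z $ j)\<^sup>2)"
  have R: "R \<ge> 0" by (simp add: R_def sum_nonneg)
  define \<delta> where "\<delta> = M / (2 * (R + 1))"
  have \<delta>: "\<delta> > 0" "\<delta> * R \<le> M / 2"
    using M R by (auto simp: \<delta>_def field_simps)
  define P where "P j s = \<delta> * s\<^sup>2 - Q j s" for j s
  define p where "p x = (\<Sum>j\<in>UNIV. P j (x $ j))" for x :: "real ^ 'n"
  have pv: "p x = \<delta> * (\<Sum>j\<in>UNIV. (x $ j)\<^sup>2) - v x" for x
    by (simp add: p_def P_def v_def sum_subtractf sum_distrib_left)
  define g where "g x = \<sigma> * w x + p x" for x
  have cg: "continuous_on K g"
    unfolding g_def pv v_def K_def using cw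
    by (intro continuous_intros continuous_on_separable_sum[OF Q] continuous_on_component continuous_on_id)
  obtain y where yK: "y \<in> K" and ymax: "\<And>x. x \<in> K \<Longrightarrow> g x \<le> g y"
    using continuous_attains_sup[OF K cg] by auto
  have "M \<le> g x0"
    using \<delta> by (simp add: g_def pv M_def sum_nonneg)
  also have "\<dots> \<le> g y" using ymax x0 by (simp add: K_def)
  also have "\<dots> \<le> \<sigma> * w y - v y + M / 2"
  proof -
    have "\<delta> * (\<Sum>j\<in>UNIV. (y $ j)\<^sup>2) \<le> \<delta> * R"
      using z[OF yK] \<delta> unfolding R_def by (intro mult_left_mono) auto
    with \<delta>(2) show ?thesis unfolding g_def pv by linarith
  qed
  finally have "v y < \<sigma> * w y" using M by simp
  hence yS: "y \<in> box lo hi \<inter> D" using bdry yK by (force simp: K_def v_def)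
  then obtain r where r: "r > 0" "ball y r \<subseteq> box lo hi"
    using open_contains_ball open_box by blast
  have p_axis: "p (y + s *\<^sub>R axis j 1) = p y + (2 * \<delta> * y $ j - b j - 2 * a j * y $ j) * s + (\<delta> - a j) * s\<^sup>2"
    for j s
    unfolding p_def sum_components_add_axis
    by (simp add: P_def Q power2_eq_square algebra_simps)
  moreover have "\<sigma> * laplacian w y + 2 * (\<Sum>j\<in>UNIV. \<delta> - a j) > 0"
    using harm yS \<delta> a by (simp add: harmonic_on_def sum_subtractf)
  ultimately obtain x where "x \<in> ball y r" "g x > g y"
    using C2_plus_axis_quadratic_no_local_max[OF D _ _ p_axis _ r(1)] harm yS
    unfolding g_def harmonic_on_def by blast
  with r ymax show False
    using box_subset_cbox by (force simp: K_def)
qed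

lemma sum_if_eq_card:
  fixes c d :: real
  shows "(\<Sum>j\<in>(UNIV::'n::finite set). if j = k then c else d) = c + (real CARD('n) - 1) * d"
proof -
  have "CARD('n) \<ge> 1" by (simp add: Suc_leI)
  then show ?thesis by (simp add: sum.delta_remove card_Diff_singleton of_nat_diff)
qed

lemma open_Int_norm_pos:
  fixes U :: "'a::topological_space \<Rightarrow> 'b::real_normed_vector"
  assumes "open \<Omega>" "continuous_on \<Omega> U"
  shows "open (\<Omega> \<inter> {x. norm (U x) > 0})"
proof -
  have "open (\<Omega> \<inter> (\<lambda>x. norm (U x)) -` {0<..})"
    using assms by (intro continuous_open_preimage continuous_on_norm) auto
  then show ?thesis by (simp add: vimage_def)
qed

lemma norm_le_card_mult_component_bound:
  fixes x c :: "real ^ 'n::finite" and \<rho> :: real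
  assumes "\<And>j. \<bar>x $ j - c $ j\<bar> \<le> \<rho>"
  shows "norm (x - c) \<le> CARD('n) * \<rho>"
proof -
  have "norm (x - c) \<le> (\<Sum>j\<in>UNIV. \<bar>(x - c) $ j\<bar>)" by (rule norm_le_l1_cart)
  also have "\<dots> \<le> (\<Sum>j\<in>(UNIV::'n set). \<rho>)" using assms by (intro sum_mono) auto
  finally show ?thesis by simp
qed

lemma cbox_minus_box_face:
  fixes x :: "real ^ 'n::finite"
  assumes "x \<in> cbox lo hi" "x \<notin> box lo hi"
  obtains j where "x $ j = lo $ j \<or> x $ j = hi $ j"
proof -
  obtain j where "\<not> (lo $ j < x $ j \<and> x $ j < hi $ j)" using assms(2) by (auto simp: mem_box_cart)
  with assms(1) have "x $ j = lo $ j \<or> x $ j = hi $ j"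
    by (auto simp: mem_box_cart less_le dest!: spec[of _ j])
  then show ?thesis by (rule that)
qed

lemma vanishing_extends_to_closed_halfspace:
  fixes U :: "real ^ 'n::{finite,linorder} \<Rightarrow> 'b::real_normed_vector"
  assumes S: "open S" and cU: "continuous_on S U"
    and zero: "\<And>y. y \<in> S \<Longrightarrow> xn y < c \<Longrightarrow> U y = 0"
    and x: "x \<in> S" "xn x \<le> c"
  shows "U x = 0"
proof -
  define \<gamma> where "\<gamma> t = x - t *\<^sub>R axis last_idx 1" for t :: real
  have \<gamma>: "(\<gamma> \<longlongrightarrow> x) (at_right 0)"
    unfolding \<gamma>_def by (auto intro!: tendsto_eq_intros)
  have "isCont U x" using cU S x(1) by (simp add: continuous_on_eq_continuous_at)
  then have "((\<lambda>t. U (\<gamma> t)) \<longlongrightarrow> U x) (at_right 0)"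
    using \<gamma> by (rule isCont_tendsto_compose)
  moreover have "\<forall>\<^sub>F t in at_right 0. U (\<gamma> t) = 0"
  proof -
    have below: "xn (\<gamma> t) < c" if "t > 0" for t
      using that x(2) by (simp add: \<gamma>_def xn_def)
    have "\<forall>\<^sub>F t in at_right 0. \<gamma> t \<in> S" using \<gamma> S x(1) by (rule topological_tendstoD)
    moreover have "\<forall>\<^sub>F t in at_right (0::real). t > 0" by (simp add: eventually_at_right_less)
    ultimately show ?thesis
      by eventually_elim (simp add: zero below)
  qed
  ultimately have "((\<lambda>_. 0) \<longlongrightarrow> U x) (at_right (0::real))"
    by (rule Lim_transform_eventually)
  then show ?thesis
    by (simp add: tendsto_const_iff)
qed

text \<open>Profiles of the barrier: the t^2 coefficient of barrier_normal is -(N - 1) times that of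
  barrier_tangential, so one normal and N - 1 tangential profiles sum to a harmonic function;
  both profiles equal 2 at distance 1/(8N) from their base point.\<close>

definition barrier_normal :: "real \<Rightarrow> real \<Rightarrow> real" where
  "barrier_normal N t = 16 * N\<^sup>2 * t - 128 * N\<^sup>2 * (N - 1) * t\<^sup>2"

definition barrier_tangential :: "real \<Rightarrow> real \<Rightarrow> real" where
  "barrier_tangential N t = 128 * N\<^sup>2 * t\<^sup>2"

lemma barrier_normal_nonneg:
  assumes "1 \<le> N" "0 \<le> t" "t \<le> 1 / (8 * N)"
  shows "0 \<le> barrier_normal N t"
proof -
  have "128 * N\<^sup>2 * (N - 1) * t \<le> 128 * N\<^sup>2 * (N - 1) * (1 / (8 * N))"
    using assms by (intro mult_left_mono) auto
  also have "\<dots> \<le> 16 * N\<^sup>2"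
    using assms(1) by (simp add: power2_eq_square field_simps)
  finally have "0 \<le> t * (16 * N\<^sup>2 - 128 * N\<^sup>2 * (N - 1) * t)"
    using assms(2) by simp
  then show ?thesis by (simp add: barrier_normal_def power2_eq_square algebra_simps)
qed

lemma barrier_normal_le:
  assumes "1 \<le> N"
  shows "barrier_normal N t \<le> 16 * N\<^sup>2 * t"
proof -
  have "0 \<le> 128 * N\<^sup>2 * (N - 1) * t\<^sup>2" using assms by simp
  then show ?thesis by (simp add: barrier_normal_def)
qed

lemma barrier_normal_width: "1 \<le> N \<Longrightarrow> barrier_normal N (1 / (8 * N)) = 2"
  by (simp add: barrier_normal_def power2_eq_square field_simps)

lemma barrier_tangential_width:
  assumes "N > 0" "\<bar>t\<bar> = 1 / (8 * N)"
  shows "barrier_tangential N t = 2"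
proof -
  have "barrier_tangential N t = 128 * N\<^sup>2 * (1 / (8 * N))\<^sup>2"
    unfolding barrier_tangential_def by (metis assms(2) power2_abs)
  with assms(1) show ?thesis by (simp add: power2_eq_square field_simps)
qed

definition flat_barrier :: "real \<Rightarrow> real ^ 'n::{finite,linorder} \<Rightarrow> 'n \<Rightarrow> real \<Rightarrow> real" where
  "flat_barrier \<epsilon> z j s = \<epsilon> *
     (if j = last_idx then barrier_normal (real CARD('n)) (s + \<epsilon>)
      else barrier_tangential (real CARD('n)) (s - z $ j))"

lemma flat_barrier_harmonic_quadratic:
  fixes z :: "real ^ 'n::{finite,linorder}"
  shows "\<exists>a b c. (\<forall>j s. flat_barrier \<epsilon> z j s = c j + b j * s + a j * s\<^sup>2) \<and> sum a UNIV = 0"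
proof (intro exI conjI allI)
  define N where "N = real CARD('n)"
  show "flat_barrier \<epsilon> z j s =
      \<epsilon> * (if j = last_idx then 16 * N\<^sup>2 * \<epsilon> - 128 * N\<^sup>2 * (N - 1) * \<epsilon>\<^sup>2 else 128 * N\<^sup>2 * (z $ j)\<^sup>2)
    + \<epsilon> * (if j = last_idx then 16 * N\<^sup>2 - 256 * N\<^sup>2 * (N - 1) * \<epsilon> else - 256 * N\<^sup>2 * z $ j) * s
    + \<epsilon> * (if j = last_idx then - 128 * N\<^sup>2 * (N - 1) else 128 * N\<^sup>2) * s\<^sup>2" for j s
    by (cases "j = last_idx") (simp_all add: flat_barrier_def barrier_normal_def
        barrier_tangential_def N_def power2_eq_square algebra_simps)
  show "(\<Sum>j\<in>UNIV. \<epsilon> * (if (j::'n) = last_idx then - 128 * N\<^sup>2 * (N - 1) else 128 * N\<^sup>2)) = 0"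
    by (simp add: sum_distrib_left[symmetric] sum_if_eq_card N_def algebra_simps)
qed

lemma flat_barrier_nonneg:
  fixes z :: "real ^ 'n::{finite,linorder}"
  assumes "0 \<le> \<epsilon>" and "j = last_idx \<Longrightarrow> 0 \<le> s + \<epsilon> \<and> s + \<epsilon> \<le> 1 / (8 * real CARD('n))"
  shows "0 \<le> flat_barrier \<epsilon> z j s"
  using assms barrier_normal_nonneg[of "real CARD('n)" "s + \<epsilon>"]
  by (auto simp: flat_barrier_def barrier_tangential_def)

lemma flat_barrier_top:
  fixes z :: "real ^ 'n::{finite,linorder}"
  shows "flat_barrier \<epsilon> z last_idx (1 / (8 * real CARD('n)) - \<epsilon>) = 2 * \<epsilon>"
  by (simp add: flat_barrier_def barrier_normal_width)

lemma flat_barrier_side: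
  fixes z :: "real ^ 'n::{finite,linorder}"
  assumes "j \<noteq> last_idx" "\<bar>s - z $ j\<bar> = 1 / (8 * real CARD('n))"
  shows "flat_barrier \<epsilon> z j s = 2 * \<epsilon>"
  using assms barrier_tangential_width[of "real CARD('n)"] by (simp add: flat_barrier_def)

lemma flat_barrier_center:
  fixes z :: "real ^ 'n::{finite,linorder}"
  assumes "0 \<le> \<epsilon>" "0 \<le> xn z + \<epsilon>"
  shows "(\<Sum>j\<in>UNIV. flat_barrier \<epsilon> z j (z $ j)) \<le> 16 * real CARD('n) ^ 2 * \<epsilon> * (xn z + \<epsilon>)"
proof -
  have "(\<Sum>j\<in>UNIV. flat_barrier \<epsilon> z j (z $ j)) = \<epsilon> * barrier_normal (real CARD('n)) (xn z + \<epsilon>)"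
    by (simp add: flat_barrier_def barrier_tangential_def xn_def if_distrib[of "\<lambda>r. \<epsilon> * r"] sum.delta_remove)
  also have "\<dots> \<le> \<epsilon> * (16 * real CARD('n) ^ 2 * (xn z + \<epsilon>))"
    using assms(1) barrier_normal_le[of "real CARD('n)"] by (intro mult_left_mono) auto
  finally show ?thesis by (simp add: mult_ac)
qed

definition flat_box_lo :: "real \<Rightarrow> real ^ 'n::{finite,linorder} \<Rightarrow> real ^ 'n::{finite,linorder}" where
  "flat_box_lo \<epsilon> z = (\<chi> j. if j = last_idx then - \<epsilon> else z $ j - 1 / (8 * real CARD('n)))"

definition flat_box_hi :: "real \<Rightarrow> real ^ 'n::{finite,linorder} \<Rightarrow> real ^ 'n::{finite,linorder}" where
  "flat_box_hi \<epsilon> z = (\<chi> j. if j = last_idx then 1 / (8 * real CARD('n)) - \<epsilon> else z $ j + 1 / (8 * real CARD('n)))"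

lemma mem_flat_box:
  fixes x z :: "real ^ 'n::{finite,linorder}"
  shows "x \<in> cbox (flat_box_lo \<epsilon> z) (flat_box_hi \<epsilon> z) \<longleftrightarrow>
     - \<epsilon> \<le> xn x \<and> xn x \<le> 1 / (8 * real CARD('n)) - \<epsilon> \<and>
     (\<forall>j. j \<noteq> last_idx \<longrightarrow> \<bar>x $ j - z $ j\<bar> \<le> 1 / (8 * real CARD('n)))"
proof -
  have "x \<in> cbox (flat_box_lo \<epsilon> z) (flat_box_hi \<epsilon> z) \<longleftrightarrow>
      (\<forall>j. (j = last_idx \<longrightarrow> - \<epsilon> \<le> x $ j \<and> x $ j \<le> 1 / (8 * real CARD('n)) - \<epsilon>) \<and>
           (j \<noteq> last_idx \<longrightarrow> \<bar>x $ j - z $ j\<bar> \<le> 1 / (8 * real CARD('n))))"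
    by (simp add: mem_box_cart flat_box_lo_def flat_box_hi_def abs_le_iff algebra_simps) blast
  then show ?thesis by (auto simp: xn_def)
qed

lemma flat_box_subset_ball:
  fixes z :: "real ^ 'n::{finite,linorder}"
  assumes "z \<in> ball 0 (3/4)" "0 \<le> xn z + \<epsilon>" "xn z + \<epsilon> \<le> 1 / (8 * real CARD('n))"
  shows "cbox (flat_box_lo \<epsilon> z) (flat_box_hi \<epsilon> z) \<subseteq> ball 0 1"
proof
  fix x assume "x \<in> cbox (flat_box_lo \<epsilon> z) (flat_box_hi \<epsilon> z)"
  then have "\<bar>x $ j - z $ j\<bar> \<le> 1 / (8 * real CARD('n))" for j
    using assms(2,3) unfolding mem_flat_box by (cases "j = last_idx") (auto simp: xn_def)
  then have "norm (x - z) \<le> real CARD('n) * (1 / (8 * real CARD('n)))"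
    by (rule norm_le_card_mult_component_bound)
  then have "norm (x - z) \<le> 1/8" by simp
  with assms(1) show "x \<in> ball 0 1" using norm_triangle_ineq[of "x - z" z] by simp
qed

lemma center_mem_flat_box:
  fixes z :: "real ^ 'n::{finite,linorder}"
  assumes "0 \<le> xn z + \<epsilon>" "xn z + \<epsilon> \<le> 1 / (8 * real CARD('n))"
  shows "z \<in> cbox (flat_box_lo \<epsilon> z) (flat_box_hi \<epsilon> z)"
  using assms unfolding mem_flat_box by simp

lemma flat_barrier_nonneg_on_box:
  fixes x z :: "real ^ 'n::{finite,linorder}"
  assumes "0 \<le> \<epsilon>" "x \<in> cbox (flat_box_lo \<epsilon> z) (flat_box_hi \<epsilon> z)"
  shows "0 \<le> flat_barrier \<epsilon> z j (x $ j)"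
  using assms unfolding mem_flat_box by (intro flat_barrier_nonneg) (auto simp: xn_def)

lemma flat_barrier_on_box_boundary:
  fixes z :: "real ^ 'n::{finite,linorder}"
  assumes "0 \<le> \<epsilon>" and x: "x \<in> cbox (flat_box_lo \<epsilon> z) (flat_box_hi \<epsilon> z)"
    and "x \<notin> box (flat_box_lo \<epsilon> z) (flat_box_hi \<epsilon> z)" and "xn x \<noteq> - \<epsilon>"
  shows "2 * \<epsilon> \<le> (\<Sum>j\<in>UNIV. flat_barrier \<epsilon> z j (x $ j))"
proof -
  obtain j where j: "x $ j = flat_box_lo \<epsilon> z $ j \<or> x $ j = flat_box_hi \<epsilon> z $ j"
    using cbox_minus_box_face assms(2,3) by blast
  have "flat_barrier \<epsilon> z j (x $ j) = 2 * \<epsilon>"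
  proof (cases "j = last_idx")
    case True
    then show ?thesis
      using j assms(4) flat_barrier_top by (auto simp: flat_box_lo_def flat_box_hi_def xn_def)
  next
    case False
    with j show ?thesis by (intro flat_barrier_side) (auto simp: flat_box_lo_def flat_box_hi_def)
  qed
  then show ?thesis
    using member_le_sum[of j UNIV "\<lambda>k. flat_barrier \<epsilon> z k (x $ k)"]
      flat_barrier_nonneg_on_box[OF assms(1) x] by simp
qed

lemma viscosity_solution_component_barrier:
  fixes U :: "real ^ 'n::{finite,linorder} \<Rightarrow> real ^ 'm::finite" and \<epsilon> \<sigma> :: real
  assumes vs: "viscosity_solution (ball 0 1) U" and ep: "\<epsilon> > 0"
    and bnd: "\<And>x. x \<in> ball 0 1 \<Longrightarrow> \<sigma> * U x $ i \<le> \<epsilon>"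
    and zero: "\<And>x. x \<in> ball 0 1 \<Longrightarrow> xn x \<le> - \<epsilon> \<Longrightarrow> U x = 0"
    and z: "z \<in> ball 0 (3/4)"
    and t: "0 < xn z + \<epsilon>" "xn z + \<epsilon> < 1 / (8 * real CARD('n))"
  shows "\<sigma> * U z $ i \<le> 16 * real CARD('n) ^ 2 * \<epsilon> * (xn z + \<epsilon>)"
proof -
  let ?K = "cbox (flat_box_lo \<epsilon> z) (flat_box_hi \<epsilon> z)"
  have K_ball: "?K \<subseteq> ball 0 1" using flat_box_subset_ball[OF z] t by simp
  obtain a b c where Q: "\<And>j s. flat_barrier \<epsilon> z j s = c j + b j * s + a j * s\<^sup>2" and a: "sum a UNIV = 0"
    using flat_barrier_harmonic_quadratic by blast
  have cU: "continuous_on (ball 0 1) U" using vs by (simp add: viscosity_solution_def)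
  have "\<sigma> * U z $ i \<le> (\<Sum>j\<in>UNIV. flat_barrier \<epsilon> z j (z $ j))"
  proof (rule harmonic_le_separable_quadratic[OF _ _ _ Q a])
    show "harmonic_on (ball 0 1 \<inter> {x. norm (U x) > 0}) (\<lambda>x. U x $ i)"
      using vs unfolding viscosity_solution_def by blast
    show "open (ball 0 1 \<inter> {x. norm (U x) > 0})" using cU by (intro open_Int_norm_pos) auto
    show "continuous_on ?K (\<lambda>x. U x $ i)"
      by (intro continuous_on_component continuous_on_subset[OF cU K_ball])
    show "z \<in> ?K" using t by (intro center_mem_flat_box) auto
  next
    fix x assume x: "x \<in> ?K" and out: "x \<notin> box (flat_box_lo \<epsilon> z) (flat_box_hi \<epsilon> z) \<inter> (ball 0 1 \<inter> {x. norm (U x) > 0})"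
    have x1: "x \<in> ball 0 1" using x K_ball by auto
    show "\<sigma> * U x $ i \<le> (\<Sum>j\<in>UNIV. flat_barrier \<epsilon> z j (x $ j))"
    proof (cases "U x = 0")
      case True
      have "0 \<le> (\<Sum>j\<in>UNIV. flat_barrier \<epsilon> z j (x $ j))"
        using ep x by (intro sum_nonneg flat_barrier_nonneg_on_box) auto
      with True show ?thesis by simp
    next
      case False
      then have "x \<notin> box (flat_box_lo \<epsilon> z) (flat_box_hi \<epsilon> z)" "xn x \<noteq> - \<epsilon>"
        using out x1 zero[OF x1] by auto
      with ep x have "2 * \<epsilon> \<le> (\<Sum>j\<in>UNIV. flat_barrier \<epsilon> z j (x $ j))"
        by (intro flat_barrier_on_box_boundary) auto
      then show ?thesis using bnd[OF x1] ep by simp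
    qed
  qed
  also have "\<dots> \<le> 16 * real CARD('n) ^ 2 * \<epsilon> * (xn z + \<epsilon>)"
    using ep t(1) by (intro flat_barrier_center) auto
  finally show ?thesis .
qed

lemma component_le_dist_scaled_e1:
  fixes u :: "real ^ 'm::{finite,linorder}"
  assumes "norm (u - s *\<^sub>R e1) \<le> \<epsilon>" "i \<noteq> first_idx"
  shows "\<bar>u $ i\<bar> \<le> \<epsilon>"
  using component_le_norm_cart[of "u - s *\<^sub>R e1" i] assms by (simp add: e1_def axis_def)

lemma near_ramp_e1_bounds:
  fixes u :: "real ^ 'm::{finite,linorder}"
  assumes near: "norm (u - max t 0 *\<^sub>R e1) \<le> \<epsilon>" and zero: "t < - \<epsilon> \<Longrightarrow> u = 0"
  shows "t - \<epsilon> \<le> u $ first_idx" "u $ first_idx \<le> norm u" "norm u \<le> max (t + 2 * \<epsilon>) 0"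
proof -
  have "\<bar>u $ first_idx - max t 0\<bar> \<le> \<epsilon>"
    using component_le_norm_cart[of "u - max t 0 *\<^sub>R e1" first_idx] near by (simp add: e1_def)
  then show "t - \<epsilon> \<le> u $ first_idx" by linarith
  show "u $ first_idx \<le> norm u" using component_le_norm_cart[of u first_idx] by simp
  have "norm u \<le> \<epsilon> + max t 0"
    using norm_triangle_sub[of u "max t 0 *\<^sub>R e1"] near by (simp add: e1_def)
  moreover have "0 \<le> \<epsilon>" using near norm_ge_zero order_trans by blast
  ultimately show "norm u \<le> max (t + 2 * \<epsilon>) 0"
    using zero by (cases "t < - \<epsilon>") auto
qed

lemma viscosity_solution_flat_tangential_bound:
  fixes U :: "real ^ 'n::{finite,linorder} \<Rightarrow> real ^ 'm::{finite,linorder}" and \<epsilon> :: real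
  assumes vs: "viscosity_solution (ball 0 1) U" and ep: "\<epsilon> > 0"
    and near: "\<And>x. x \<in> ball 0 1 \<Longrightarrow> norm (U x - max (xn x) 0 *\<^sub>R e1) \<le> \<epsilon>"
    and zero: "\<And>x. x \<in> ball 0 1 \<Longrightarrow> xn x < - \<epsilon> \<Longrightarrow> U x = 0"
    and x: "x \<in> ball 0 (3/4)" and i: "i \<noteq> first_idx"
  shows "\<bar>U x $ i\<bar> \<le> 16 * real CARD('n) ^ 2 * \<epsilon> * max (xn x + \<epsilon>) 0"
proof -
  define N where "N = real CARD('n)"
  have N: "1 \<le> N" by (simp add: N_def)
  have x1: "x \<in> ball 0 1" using x by simp
  have bnd: "\<bar>U y $ i\<bar> \<le> \<epsilon>" if "y \<in> ball 0 1" for y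
    using component_le_dist_scaled_e1[OF near[OF that] i] .
  have cU: "continuous_on (ball 0 1) U" using vs by (simp add: viscosity_solution_def)
  have zero': "U y = 0" if "y \<in> ball 0 1" "xn y \<le> - \<epsilon>" for y
    using vanishing_extends_to_closed_halfspace[OF open_ball cU zero that] .
  consider "xn x + \<epsilon> \<le> 0" | "0 < xn x + \<epsilon>" "xn x + \<epsilon> < 1 / (8 * N)" | "1 / (8 * N) \<le> xn x + \<epsilon>"
    by linarith
  then show ?thesis
  proof cases
    case 1
    then show ?thesis using zero'[OF x1] ep by simp
  next
    case 2
    have "\<sigma> * U x $ i \<le> 16 * real CARD('n) ^ 2 * \<epsilon> * (xn x + \<epsilon>)" if "\<bar>\<sigma>\<bar> = 1" for \<sigma>
    proof (rule viscosity_solution_component_barrier[OF vs ep _ zero' x 2[unfolded N_def]])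
      fix y :: "real ^ 'n::{finite,linorder}" assume "y \<in> ball 0 1"
      then have "\<bar>\<sigma> * U y $ i\<bar> \<le> \<epsilon>" using bnd that by (simp add: abs_mult)
      then show "\<sigma> * U y $ i \<le> \<epsilon>" by simp
    qed
    from this[of 1] this[of "-1"] have "\<bar>U x $ i\<bar> \<le> 16 * real CARD('n) ^ 2 * \<epsilon> * (xn x + \<epsilon>)"
      by (simp add: abs_le_iff)
    with 2 show ?thesis by simp
  next
    case 3
    have "0 < 1 / (8 * N)" using N by simp
    with 3 have pos: "0 < xn x + \<epsilon>" by linarith
    have "1 \<le> 2 * N" using N by simp
    also have "2 * N = 16 * N\<^sup>2 * (1 / (8 * N))" using N by (simp add: power2_eq_square field_simps)
    also have "\<dots> \<le> 16 * N\<^sup>2 * (xn x + \<epsilon>)" using 3 by (intro mult_left_mono) auto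
    finally have "\<epsilon> * 1 \<le> \<epsilon> * (16 * N\<^sup>2 * (xn x + \<epsilon>))" using ep by (intro mult_left_mono) auto
    with pos bnd[OF x1] show ?thesis by (simp add: N_def mult_ac)
  qed
qed

theorem lemma2p2:
  "\<exists>C>0. \<forall>(U :: real ^ 'n::{finite,linorder} \<Rightarrow> real ^ 'm::{finite,linorder}) (\<epsilon>::real).
     viscosity_solution (ball 0 1) U \<and> \<epsilon> > 0 \<and>
     (\<forall>x\<in>ball 0 1. norm (U x - max (xn x) 0 *\<^sub>R e1) \<le> \<epsilon>) \<and>
     (\<forall>x\<in>ball 0 1. xn x < - \<epsilon> \<longrightarrow> U x = 0)
     \<longrightarrow>
     (\<forall>x\<in>ball 0 (3/4). \<forall>i. i \<noteq> first_idx \<longrightarrow> \<bar>U x $ i\<bar> \<le> C * \<epsilon> * max (xn x + \<epsilon>) 0) \<and>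
     (\<forall>x\<in>ball 0 1. xn x - \<epsilon> \<le> U x $ first_idx \<and> U x $ first_idx \<le> norm (U x) \<and>
                    norm (U x) \<le> max (xn x + 2 * \<epsilon>) 0)"
proof (intro exI[of _ "16 * real CARD('n) ^ 2"] conjI allI impI ballI; (elim conjE)?)
  show "0 < 16 * real CARD('n) ^ 2" by simp
next
  fix U :: "real ^ 'n::{finite,linorder} \<Rightarrow> real ^ 'm::{finite,linorder}" and \<epsilon> :: real
    and x :: "real ^ 'n::{finite,linorder}" and i :: "'m::{finite,linorder}"
  assume "viscosity_solution (ball 0 1) U" "\<epsilon> > 0"
    and "\<forall>x\<in>ball 0 1. norm (U x - max (xn x) 0 *\<^sub>R e1) \<le> \<epsilon>"
    and "\<forall>x\<in>ball 0 1. xn x < - \<epsilon> \<longrightarrow> U x = 0" and "x \<in> ball 0 (3/4)" and "i \<noteq> first_idx"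
  then show "\<bar>U x $ i\<bar> \<le> 16 * real CARD('n) ^ 2 * \<epsilon> * max (xn x + \<epsilon>) 0"
    by (intro viscosity_solution_flat_tangential_bound) auto
next
  fix U :: "real ^ 'n::{finite,linorder} \<Rightarrow> real ^ 'm::{finite,linorder}" and \<epsilon> :: real
    and x :: "real ^ 'n::{finite,linorder}"
  assume near: "\<forall>x\<in>ball 0 1. norm (U x - max (xn x) 0 *\<^sub>R e1) \<le> \<epsilon>"
    and zero: "\<forall>x\<in>ball 0 1. xn x < - \<epsilon> \<longrightarrow> U x = 0" and x: "x \<in> ball 0 1"
  have "norm (U x - max (xn x) 0 *\<^sub>R e1) \<le> \<epsilon>" "xn x < - \<epsilon> \<Longrightarrow> U x = 0"
    using near zero x by auto
  from near_ramp_e1_bounds[OF this]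
  show "xn x - \<epsilon> \<le> U x $ first_idx" "U x $ first_idx \<le> norm (U x)"
    "norm (U x) \<le> max (xn x + 2 * \<epsilon>) 0" by simp_all
qed

end
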